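(* Let $h$ be a complex-valued function that is holomorphic on an open neighbourhood of $S^3$ in $\mathbb{C}^2$, and let $\mathbf{F}=\mathbf{E}+\mathrm{i}\mathbf{B}=h(\alpha,\beta)\,\nabla\alpha\times\nabla\beta$ with $\alpha,\beta$ as defined in the context. Suppose $L\subset\mathbb{R}^3$ is a union of closed magnetic field lines of $\mathbf{B}(0,\cdot)$, or a union of closed electric field lines of $\mathbf{E}(0,\cdot)$. Then $\varphi(L)$, where $\varphi=(\alpha,\beta)|_{t=0}$, is a Legendrian link in $S^3$ with respect to the standard contact structure.
   Context: $S^3=\{(z_1,z_2)\in\mathbb{C}^2: |z_1|^2+|z_2|^2=1\}$. Define $\alpha,\beta:\mathbb{R}\times\mathbb{R}^3\to\mathbb{C}$ by $\alpha=\dfrac{x^2+y^2+z^2-t^2-1+2\mathrm{i}z}{x^2+y^2+z^2-(t-\mathrm{i})^2}$, $\beta=\dfrac{2(x-\mathrm{i}y)}{x^2+y^2+z^2-(t-\mathrm{i})^2}$; for each fixed $t$, $(\alpha,\beta)$ maps $\mathbb{R}^3$ into $S^3$ (extending to a diffeomorphism $\mathbb{R}^3\cup\{\infty\}\to S^3$, with $\infty\mapsto(1,0)$). $\nabla$ denotes the gradient in the spatial variables $(x,y,z)$, and $\mathbf{E}=\mathrm{Re}\,\mathbf{F}$, $\mathbf{B}=\mathrm{Im}\,\mathbf{F}$. Writing $z_j=x_j+\mathrm{i}y_j$, the standard contact structure $\xi_0$ on $S^3$ is the plane field $\ker(\alpha_0)\cap TS^3$ with $\alpha_0=\sum_{j=1}^2(x_j\,dy_j-y_j\,dx_j)$;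 equivalently $\xi_0$ at $p$ is the maximal complex subspace of $T_pS^3$. A link in $S^3$ is Legendrian if it is everywhere tangent to $\xi_0$. A closed field line is a closed embedded curve along which the field is nonvanishing and tangent. *)

theory Defs
  imports "HOL-Analysis.Analysis"
begin

definition S3 :: "(complex \<times> complex) set" where
  "S3 = {(z1, z2). (cmod z1)\<^sup>2 + (cmod z2)\<^sup>2 = 1}"

definition alpha0 :: "complex \<times> complex \<Rightarrow> complex \<times> complex \<Rightarrow> real" where
  "alpha0 p v =
     Re (fst p) * Im (fst v) - Im (fst p) * Re (fst v)
   + Re (snd p) * Im (snd v) - Im (snd p) * Re (snd v)"

definition tangent_S3 :: "complex \<times> complex \<Rightarrow> complex \<times> complex \<Rightarrow> bool" where
  "tangent_S3 p v \<longleftrightarrow>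
     Re (fst p) * Re (fst v) + Im (fst p) * Im (fst v)
   + Re (snd p) * Re (snd v) + Im (snd p) * Im (snd v) = 0"

definition in_xi0 :: "complex \<times> complex \<Rightarrow> complex \<times> complex \<Rightarrow> bool" where
  "in_xi0 p v \<longleftrightarrow> tangent_S3 p v \<and> alpha0 p v = 0"

definition holomorphic2_on :: "(complex \<times> complex \<Rightarrow> complex) \<Rightarrow> (complex \<times> complex) set \<Rightarrow> bool" where
  "holomorphic2_on h U \<longleftrightarrow>
     (\<forall>p\<in>U. \<exists>D. (h has_derivative D) (at p) \<and>
                 (\<forall>c::complex. \<forall>v. D (c * fst v, c * snd v) = c * D v))"

definition closed_embedded_curve :: "(real \<Rightarrow> 'a::real_normed_vector) \<Rightarrow> bool" where
  "closed_embedded_curve c \<longleftrightarrow>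
     (\<exists>T>0. (\<forall>s. c (s + T) = c s) \<and> inj_on c {0..<T}) \<and>
     (\<forall>s. c differentiable (at s)) \<and>
     continuous_on UNIV (\<lambda>s. vector_derivative c (at s)) \<and>
     (\<forall>s. vector_derivative c (at s) \<noteq> 0)"

definition closed_field_line :: "(real^3 \<Rightarrow> real^3) \<Rightarrow> (real \<Rightarrow> real^3) \<Rightarrow> bool" where
  "closed_field_line V \<gamma> \<longleftrightarrow>
     closed_embedded_curve \<gamma> \<and>
     (\<forall>s. V (\<gamma> s) \<noteq> 0 \<and> (\<exists>k::real. vector_derivative \<gamma> (at s) = k *\<^sub>R V (\<gamma> s)))"

definition legendrian_link :: "(complex \<times> complex) set \<Rightarrow> bool" where
  "legendrian_link K \<longleftrightarrow>
     (\<exists>\<C>. finite \<C> \<and> K = (\<Union>c\<in>\<C>. range c) \<and>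
        (\<forall>c\<in>\<C>. closed_embedded_curve c \<and> range c \<subseteq> S3 \<and>
                 (\<forall>s. in_xi0 (c s) (vector_derivative c (at s)))) \<and>
        (\<forall>c1\<in>\<C>. \<forall>c2\<in>\<C>. range c1 = range c2 \<or> range c1 \<inter> range c2 = {}))"

definition denom :: "real \<Rightarrow> real^3 \<Rightarrow> complex" where
  "denom t p = complex_of_real ((p$1)\<^sup>2 + (p$2)\<^sup>2 + (p$3)\<^sup>2) - (complex_of_real t - \<i>)\<^sup>2"

definition alpha :: "real \<Rightarrow> real^3 \<Rightarrow> complex" where
  "alpha t p = (complex_of_real ((p$1)\<^sup>2 + (p$2)\<^sup>2 + (p$3)\<^sup>2 - t\<^sup>2 - 1) + 2 * \<i> * complex_of_real (p$3))
               / denom t p"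

definition beta :: "real \<Rightarrow> real^3 \<Rightarrow> complex" where
  "beta t p = 2 * (complex_of_real (p$1) - \<i> * complex_of_real (p$2)) / denom t p"

definition cgrad :: "(real^3 \<Rightarrow> complex) \<Rightarrow> real^3 \<Rightarrow> complex^3" where
  "cgrad f p = (\<chi> i. vector_derivative (\<lambda>s. f (p + s *\<^sub>R axis i 1)) (at 0))"

definition ccross :: "complex^3 \<Rightarrow> complex^3 \<Rightarrow> complex^3" where
  "ccross u v = vector [u$2 * v$3 - u$3 * v$2, u$3 * v$1 - u$1 * v$3, u$1 * v$2 - u$2 * v$1]"

definition Ffield :: "(complex \<times> complex \<Rightarrow> complex) \<Rightarrow> real \<Rightarrow> real^3 \<Rightarrow> complex^3" where
  "Ffield h t p = (\<chi> i. h (alpha t p, beta t p) * (ccross (cgrad (alpha t) p) (cgrad (beta t) p))$i)"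

definition Efield :: "(complex \<times> complex \<Rightarrow> complex) \<Rightarrow> real \<Rightarrow> real^3 \<Rightarrow> real^3" where
  "Efield h t p = (\<chi> i. Re (Ffield h t p $ i))"

definition Bfield :: "(complex \<times> complex \<Rightarrow> complex) \<Rightarrow> real \<Rightarrow> real^3 \<Rightarrow> real^3" where
  "Bfield h t p = (\<chi> i. Im (Ffield h t p $ i))"

definition phi :: "real^3 \<Rightarrow> complex \<times> complex" where
  "phi p = (alpha 0 p, beta 0 p)"

end

theory Submission
  imports Defs "HOL-Complex_Analysis.Cauchy_Integral_Formula"
begin

(* At t = 0 the map phi is the inverse stereographic projection, an injective immersion into S3.
   Since |alpha|^2 + |beta|^2 = 1, every Hermitian product of (alpha, beta) with a partial
   derivative (d_k alpha, d_k beta) is purely imaginary.  The field F(0, .) is h times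
   grad alpha x grad beta, which is orthogonal to both gradients; combining the two facts, the
   image under dphi of E or B is Hermitian orthogonal to phi, i.e. lies in the maximal complex
   subspace xi_0.  So phi maps every field line to a Legendrian curve.  To get a link, the images
   of distinct field lines must be equal or disjoint: h is locally Lipschitz by the Cauchy
   estimates, hence so are E and B, and two field lines through a common point, reparametrised
   by a coordinate, solve the same Lipschitz ODE and therefore coincide near that point; a
   clopen argument spreads this along the whole line. *)

section \<open>The contact plane as a Hermitian orthogonal complement\<close>

lemma in_xi0_iff: "in_xi0 P v \<longleftrightarrow> cnj (fst P) * fst v + cnj (snd P) * snd v = 0"
  unfolding in_xi0_def tangent_S3_def alpha0_def
  by (simp add: complex_eq_iff algebra_simps)

lemma ccross_combination_orthogonal:
  fixes a b :: "complex^3" and A B H :: complex and f :: "complex \<Rightarrow> real"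
  assumes tangent: "\<And>k. Re (cnj A * a$k + cnj B * b$k) = 0" and f: "f = Re \<or> f = Im"
  defines "V \<equiv> \<lambda>k. of_real (f (H * ccross a b $ k))"
  shows "cnj A * (\<Sum>k\<in>UNIV. V k * a$k) + cnj B * (\<Sum>k\<in>UNIV. V k * b$k) = 0"
proof -
  define u where "u k = cnj A * a$k + cnj B * b$k" for k
  define w where "w k = ccross a b $ k" for k
  have u_imag: "u k = \<i> * of_real (Im (u k))" for k
    using tangent[of k] by (simp add: u_def complex_eq_iff)
  \<comment> \<open>the triple products \<open>a \<cdot> (a \<times> b)\<close> and \<open>b \<cdot> (a \<times> b)\<close> vanish\<close>
  have "(\<Sum>k\<in>UNIV. w k * u k) = 0"
    unfolding w_def u_def ccross_def sum_3 by simp algebra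
  then have "H * (\<Sum>k\<in>UNIV. w k * of_real (Im (u k))) = 0"
    by (subst (asm) u_imag) (simp add: sum_distrib_left algebra_simps flip: sum_distrib_left)
  moreover have "(\<Sum>k\<in>UNIV. f (H * w k) * Im (u k)) = f (H * (\<Sum>k\<in>UNIV. w k * of_real (Im (u k))))"
    using f by (auto simp: sum_3 algebra_simps)
  ultimately have "(\<Sum>k\<in>UNIV. f (H * w k) * Im (u k)) = 0"
    using f by auto
  moreover have "cnj A * (\<Sum>k\<in>UNIV. V k * a$k) + cnj B * (\<Sum>k\<in>UNIV. V k * b$k)
      = \<i> * of_real (\<Sum>k\<in>UNIV. f (H * w k) * Im (u k))"
  proof -
    have "cnj A * (\<Sum>k\<in>UNIV. V k * a$k) + cnj B * (\<Sum>k\<in>UNIV. V k * b$k) = (\<Sum>k\<in>UNIV. V k * u k)"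
      by (simp add: u_def sum_3 algebra_simps)
    also have "\<dots> = (\<Sum>k\<in>UNIV. V k * (\<i> * of_real (Im (u k))))"
      using u_imag by metis
    finally show ?thesis by (simp add: V_def w_def sum_3 algebra_simps)
  qed
  ultimately show ?thesis by simp
qed

definition stereo_scale :: "real^3 \<Rightarrow> real" where
  "stereo_scale p = 1 / (1 + (p$1)\<^sup>2 + (p$2)\<^sup>2 + (p$3)\<^sup>2)"

definition dalpha0 :: "real^3 \<Rightarrow> real^3 \<Rightarrow> complex" where
  "dalpha0 p v = Complex (4 * (stereo_scale p)\<^sup>2 * (p \<bullet> v))
     (2 * v$3 * stereo_scale p - 4 * p$3 * (stereo_scale p)\<^sup>2 * (p \<bullet> v))"

definition dbeta0 :: "real^3 \<Rightarrow> real^3 \<Rightarrow> complex" where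
  "dbeta0 p v = Complex (2 * v$1 * stereo_scale p - 4 * p$1 * (stereo_scale p)\<^sup>2 * (p \<bullet> v))
     (4 * p$2 * (stereo_scale p)\<^sup>2 * (p \<bullet> v) - 2 * v$2 * stereo_scale p)"

definition dphi :: "real^3 \<Rightarrow> real^3 \<Rightarrow> complex \<times> complex" where
  "dphi p v = (dalpha0 p v, dbeta0 p v)"

lemma inner_vec3: "(p::real^3) \<bullet> v = p$1 * v$1 + p$2 * v$2 + p$3 * v$3"
  by (simp add: inner_vec_def sum_3)

lemma stereo_denominator_pos: "1 + ((p::real^3)$1)\<^sup>2 + (p$2)\<^sup>2 + (p$3)\<^sup>2 > 0"
  by (simp add: add_pos_nonneg)

lemma stereo_denominator_nonzero: "1 + ((p::real^3)$1)\<^sup>2 + (p$2)\<^sup>2 + (p$3)\<^sup>2 \<noteq> 0"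
  using stereo_denominator_pos[of p] by linarith

lemma stereo_scale_pos: "stereo_scale p > 0"
  unfolding stereo_scale_def using stereo_denominator_pos[of p] by simp

lemma stereo_scale_mult: "stereo_scale p * (1 + (p$1)\<^sup>2 + (p$2)\<^sup>2 + (p$3)\<^sup>2) = 1"
  unfolding stereo_scale_def using stereo_denominator_pos[of p] by simp

lemma alpha_zero: "alpha 0 p = Complex (1 - 2 * stereo_scale p) (2 * p$3 * stereo_scale p)"
  using stereo_denominator_pos[of p]
  by (simp add: alpha_def denom_def stereo_scale_def complex_eq_iff field_simps power2_eq_square)

lemma beta_zero: "beta 0 p = Complex (2 * p$1 * stereo_scale p) (- 2 * p$2 * stereo_scale p)"
  using stereo_denominator_pos[of p]
  by (simp add: beta_def denom_def stereo_scale_def complex_eq_iff field_simps power2_eq_square)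

lemma has_derivative_Complex:
  "(f has_derivative f') F \<Longrightarrow> (g has_derivative g') F \<Longrightarrow>
   ((\<lambda>x. Complex (f x) (g x)) has_derivative (\<lambda>v. Complex (f' v) (g' v))) F"
  unfolding Complex_eq by (auto intro!: derivative_eq_intros)

lemma has_derivative_vec_nth: "((\<lambda>p::real^'n. p $ i) has_derivative (\<lambda>v. v $ i)) F"
  by (rule bounded_linear_imp_has_derivative) (rule bounded_linear_vec_nth)

lemma has_derivative_stereo_scale:
  "(stereo_scale has_derivative (\<lambda>v. - 2 * (stereo_scale p)\<^sup>2 * (p \<bullet> v))) (at p)"
proof -
  have "((\<lambda>p::real^3. inverse (1 + (p$1)\<^sup>2 + (p$2)\<^sup>2 + (p$3)\<^sup>2)) has_derivative
      (\<lambda>v. - 2 * (stereo_scale p)\<^sup>2 * (p \<bullet> v))) (at p)"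
    apply (rule has_derivative_eq_rhs)
     apply (rule derivative_intros has_derivative_vec_nth stereo_denominator_nonzero)+
    using stereo_denominator_pos[of p]
    by (auto simp: stereo_scale_def inner_vec3 field_simps power2_eq_square)
  then show ?thesis by (simp add: stereo_scale_def [abs_def] divide_inverse)
qed

lemma has_derivative_alpha_zero: "(alpha 0 has_derivative dalpha0 p) (at p)"
  unfolding alpha_zero [abs_def] dalpha0_def
  by (auto intro!: derivative_eq_intros has_derivative_Complex has_derivative_vec_nth
      has_derivative_stereo_scale simp: inner_vec3 field_simps power2_eq_square)

lemma has_derivative_beta_zero: "(beta 0 has_derivative dbeta0 p) (at p)"
  unfolding beta_zero [abs_def] dbeta0_def
  by (auto intro!: derivative_eq_intros has_derivative_Complex has_derivative_vec_nth
      has_derivative_stereo_scale simp: inner_vec3 field_simps power2_eq_square)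

lemma has_derivative_phi: "(phi has_derivative dphi p) (at p)"
  unfolding phi_def [abs_def] dphi_def [abs_def]
  by (intro has_derivative_Pair has_derivative_alpha_zero has_derivative_beta_zero)

lemma phi_in_S3: "phi p \<in> S3"
proof -
  have "(1 - 2 * stereo_scale p)\<^sup>2 + (2 * p$3 * stereo_scale p)\<^sup>2
      + ((2 * p$1 * stereo_scale p)\<^sup>2 + (- 2 * p$2 * stereo_scale p)\<^sup>2) = 1"
    using stereo_scale_mult[of p] by (simp add: algebra_simps power2_eq_square) algebra
  then show ?thesis
    unfolding S3_def phi_def alpha_zero beta_zero by (simp add: cmod_def)
qed

lemma inj_phi: "inj phi"
proof (rule injI)
  fix p p' assume eq: "phi p = phi p'"
  then have "stereo_scale p = stereo_scale p'"
    unfolding phi_def alpha_zero by (simp add: complex_eq_iff)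
  with eq have "p$1 = p'$1" "p$2 = p'$2" "p$3 = p'$3"
    using stereo_scale_pos[of p] unfolding phi_def alpha_zero beta_zero by (auto simp: complex_eq_iff)
  then show "p = p'" by (simp add: vec_eq_iff forall_3)
qed

lemma dphi_eq_0_iff: "dphi p v = 0 \<longleftrightarrow> v = 0"
proof
  assume 0: "dphi p v = 0"
  have "p \<bullet> v = 0"
    using 0 stereo_scale_pos[of p] by (simp add: dphi_def dalpha0_def complex_eq_iff zero_prod_def)
  with 0 have "v$1 = 0" "v$2 = 0" "v$3 = 0"
    using stereo_scale_pos[of p]
    by (auto simp: dphi_def dalpha0_def dbeta0_def complex_eq_iff zero_prod_def)
  then show "v = 0" by (simp add: vec_eq_iff forall_3)
qed (simp add: dphi_def dalpha0_def dbeta0_def zero_prod_def complex_eq_iff)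

text \<open>Tangency of \<open>dphi\<close> to \<open>S3\<close>, obtained by differentiating \<open>|\<alpha>|\<^sup>2 + |\<beta>|\<^sup>2 = 1\<close>.\<close>
lemma Re_cnj_phi_dphi: "Re (cnj (alpha 0 p) * dalpha0 p v + cnj (beta 0 p) * dbeta0 p v) = 0"
  unfolding alpha_zero beta_zero dalpha0_def dbeta0_def inner_vec3
  using stereo_scale_mult[of p] by (simp add: algebra_simps power2_eq_square) algebra

lemma cgrad_eq:
  assumes "(f has_derivative f') (at p)"
  shows "cgrad f p = (\<chi> j. f' (axis j 1))"
proof -
  have "((\<lambda>s. f (p + s *\<^sub>R axis j 1)) has_vector_derivative f' (axis j 1)) (at 0)" for j
  proof -
    have "((\<lambda>s::real. p + s *\<^sub>R axis j 1) has_derivative (\<lambda>s. s *\<^sub>R axis j 1)) (at 0)"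
      by (auto intro!: derivative_eq_intros)
    from has_derivative_compose [OF this, of f f'] assms
    have "((\<lambda>s. f (p + s *\<^sub>R axis j 1)) has_derivative (\<lambda>s. f' (s *\<^sub>R axis j 1))) (at 0)"
      by (simp add: o_def)
    then show ?thesis
      using linear_scale [OF has_derivative_linear [OF assms]]
      by (simp add: has_vector_derivative_def)
  qed
  then have "vector_derivative (\<lambda>s. f (p + s *\<^sub>R axis j 1)) (at 0) = f' (axis j 1)" for j
    by (rule vector_derivative_at)
  then show ?thesis unfolding cgrad_def by simp
qed

lemma dalpha0_eq_sum: "dalpha0 p v = (\<Sum>k\<in>UNIV. of_real (v$k) * cgrad (alpha 0) p $ k)"
  unfolding cgrad_eq [OF has_derivative_alpha_zero]
  by (simp add: dalpha0_def inner_vec3 sum_3 axis_def complex_eq_iff algebra_simps)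

lemma dbeta0_eq_sum: "dbeta0 p v = (\<Sum>k\<in>UNIV. of_real (v$k) * cgrad (beta 0) p $ k)"
  unfolding cgrad_eq [OF has_derivative_beta_zero]
  by (simp add: dbeta0_def inner_vec3 sum_3 axis_def complex_eq_iff algebra_simps)

lemma Ffield_zero:
  "Ffield h 0 p $ i = h (phi p) * ccross (cgrad (alpha 0) p) (cgrad (beta 0) p) $ i"
  unfolding Ffield_def phi_def by simp

lemma Efield_Bfield_zero_cases:
  assumes "V = Efield h 0 \<or> V = Bfield h 0"
  obtains f where "f = Re \<or> f = Im"
    and "\<And>p. V p = (\<chi> i. f (h (phi p) * ccross (cgrad (alpha 0) p) (cgrad (beta 0) p) $ i))"
  using assms that [of Re] that [of Im]
  unfolding Efield_def Bfield_def Ffield_zero by auto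

lemma dphi_field_in_xi0:
  assumes "V = Efield h 0 \<or> V = Bfield h 0"
  shows "in_xi0 (phi p) (dphi p (k *\<^sub>R V p))"
proof -
  obtain f where f: "f = Re \<or> f = Im"
    and V: "V p = (\<chi> i. f (h (phi p) * ccross (cgrad (alpha 0) p) (cgrad (beta 0) p) $ i))"
    using Efield_Bfield_zero_cases [OF assms] by metis
  have tangent: "Re (cnj (alpha 0 p) * cgrad (alpha 0) p $ k + cnj (beta 0 p) * cgrad (beta 0) p $ k) = 0"
    for k
    using Re_cnj_phi_dphi [of p "axis k 1"]
    unfolding cgrad_eq [OF has_derivative_alpha_zero] cgrad_eq [OF has_derivative_beta_zero] by simp
  have "cnj (alpha 0 p) * dalpha0 p (V p) + cnj (beta 0 p) * dbeta0 p (V p) = 0"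
    unfolding dalpha0_eq_sum dbeta0_eq_sum V
    using ccross_combination_orthogonal [OF tangent f] by simp
  moreover have "dphi p (k *\<^sub>R V p) = k *\<^sub>R dphi p (V p)"
    by (rule linear_scale [OF has_derivative_linear [OF has_derivative_phi]])
  ultimately show ?thesis
    by (simp add: in_xi0_iff phi_def dphi_def scaleR_conv_of_real algebra_simps)
      (metis distrib_left mult_zero_right)
qed

lemma continuous_on_dphi:
  "continuous_on S \<gamma> \<Longrightarrow> continuous_on S g \<Longrightarrow> continuous_on S (\<lambda>s. dphi (\<gamma> s) (g s))"
  unfolding dphi_def dalpha0_def dbeta0_def stereo_scale_def Complex_eq
  by (intro continuous_intros) (use stereo_denominator_nonzero in auto)

lemma closed_embedded_curveD:
  assumes "closed_embedded_curve \<gamma>"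
  shows "(\<gamma> has_vector_derivative vector_derivative \<gamma> (at s)) (at s)"
    and "continuous_on UNIV \<gamma>"
proof -
  have "\<forall>s. \<gamma> differentiable (at s)"
    using assms unfolding closed_embedded_curve_def by blast
  then show "(\<gamma> has_vector_derivative vector_derivative \<gamma> (at s)) (at s)"
    and "continuous_on UNIV \<gamma>"
    by (auto simp: vector_derivative_works differentiable_imp_continuous_within
        intro: continuous_at_imp_continuous_on)
qed

lemma has_vector_derivative_phi_comp:
  assumes "(\<gamma> has_vector_derivative g) (at s)"
  shows "((phi \<circ> \<gamma>) has_vector_derivative dphi (\<gamma> s) g) (at s)"
proof -
  have "((phi \<circ> \<gamma>) has_derivative (\<lambda>t. dphi (\<gamma> s) (t *\<^sub>R g))) (at s)"
    using has_derivative_compose [OF assms [unfolded has_vector_derivative_def] has_derivative_phi]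
    by (simp add: o_def)
  then show ?thesis
    unfolding has_vector_derivative_def
    using linear_scale [OF has_derivative_linear [OF has_derivative_phi]] by simp
qed

lemma
  assumes "closed_embedded_curve \<gamma>"
  shows closed_embedded_curve_phi_comp: "closed_embedded_curve (phi \<circ> \<gamma>)"
    and vector_derivative_phi_comp:
      "vector_derivative (phi \<circ> \<gamma>) (at s) = dphi (\<gamma> s) (vector_derivative \<gamma> (at s))"
proof -
  obtain T where T: "T > 0" "\<forall>s. \<gamma> (s + T) = \<gamma> s" "inj_on \<gamma> {0..<T}"
    and cont': "continuous_on UNIV (\<lambda>s. vector_derivative \<gamma> (at s))"
    and regular: "\<forall>s. vector_derivative \<gamma> (at s) \<noteq> 0"
    using assms unfolding closed_embedded_curve_def by blast
  have deriv: "((phi \<circ> \<gamma>) has_vector_derivative dphi (\<gamma> s) (vector_derivative \<gamma> (at s))) (at s)" for s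
    by (intro has_vector_derivative_phi_comp closed_embedded_curveD [OF assms])
  show eq: "vector_derivative (phi \<circ> \<gamma>) (at s) = dphi (\<gamma> s) (vector_derivative \<gamma> (at s))" for s
    by (rule vector_derivative_at [OF deriv])
  show "closed_embedded_curve (phi \<circ> \<gamma>)"
    unfolding closed_embedded_curve_def eq
  proof (intro conjI allI exI [of _ T])
    show "inj_on (phi \<circ> \<gamma>) {0..<T}"
      using T(3) inj_phi by (simp add: comp_inj_on inj_on_subset)
    show "(phi \<circ> \<gamma>) differentiable (at s)" for s
      using deriv differentiableI_vector by blast
    show "continuous_on UNIV (\<lambda>s. dphi (\<gamma> s) (vector_derivative \<gamma> (at s)))"
      by (intro continuous_on_dphi cont' closed_embedded_curveD [OF assms])
    show "dphi (\<gamma> s) (vector_derivative \<gamma> (at s)) \<noteq> 0" for s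
      using regular by (simp add: dphi_eq_0_iff)
  qed (use T in auto)
qed

lemma phi_comp_field_line_legendrian:
  assumes "V = Efield h 0 \<or> V = Bfield h 0" and "closed_field_line V \<gamma>"
  shows "closed_embedded_curve (phi \<circ> \<gamma>)" and "range (phi \<circ> \<gamma>) \<subseteq> S3"
    and "in_xi0 ((phi \<circ> \<gamma>) s) (vector_derivative (phi \<circ> \<gamma>) (at s))"
proof -
  have curve: "closed_embedded_curve \<gamma>"
    using assms(2) unfolding closed_field_line_def by blast
  then show "closed_embedded_curve (phi \<circ> \<gamma>)" by (rule closed_embedded_curve_phi_comp)
  show "range (phi \<circ> \<gamma>) \<subseteq> S3" using phi_in_S3 by auto
  obtain k where "vector_derivative \<gamma> (at s) = k *\<^sub>R V (\<gamma> s)"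
    using assms(2) unfolding closed_field_line_def by blast
  then show "in_xi0 ((phi \<circ> \<gamma>) s) (vector_derivative (phi \<circ> \<gamma>) (at s))"
    using dphi_field_in_xi0 [OF assms(1)] by (simp add: vector_derivative_phi_comp [OF curve])
qed

definition locally_lipschitz_at :: "('a::metric_space \<Rightarrow> 'b::metric_space) \<Rightarrow> 'a \<Rightarrow> bool" where
  "locally_lipschitz_at f p \<longleftrightarrow> (\<exists>e>0. \<exists>C. C-lipschitz_on (ball p e) f)"

lemma lipschitz_on_smaller_ball:
  "C-lipschitz_on (ball p e) f \<Longrightarrow> e' \<le> e \<Longrightarrow> C-lipschitz_on (ball p e') f"
  by (rule lipschitz_on_subset) auto

lemma locally_lipschitz_at_common_ball:
  assumes "locally_lipschitz_at f p" "locally_lipschitz_at g p"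
  obtains e C D where "e > 0" "C-lipschitz_on (ball p e) f" "D-lipschitz_on (ball p e) g"
proof -
  from assms obtain e1 C e2 D where
    "e1 > 0" "C-lipschitz_on (ball p e1) f" "e2 > 0" "D-lipschitz_on (ball p e2) g"
    unfolding locally_lipschitz_at_def by blast
  then show ?thesis
    using that [of "min e1 e2" C D] lipschitz_on_smaller_ball [of C p e1 f "min e1 e2"]
      lipschitz_on_smaller_ball [of D p e2 g "min e1 e2"] by auto
qed

lemma lipschitz_on_ball_norm_le:
  fixes f :: "'a::metric_space \<Rightarrow> 'b::real_normed_vector"
  assumes "C-lipschitz_on (ball p e) f" "x \<in> ball p e"
  shows "norm (f x) \<le> norm (f p) + C * e"
proof -
  have C: "C \<ge> 0" using assms lipschitz_on_nonneg by blast
  have p: "p \<in> ball p e" using assms(2) by (auto intro: le_less_trans [OF zero_le_dist])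
  have "norm (f x) \<le> norm (f p) + dist (f x) (f p)"
    by (metis dist_norm norm_triangle_sub add.commute)
  also have "dist (f x) (f p) \<le> C * dist x p" by (rule lipschitz_onD [OF assms p])
  also have "\<dots> \<le> C * e" using assms(2) C by (intro mult_left_mono) (auto simp: dist_commute)
  finally show ?thesis by simp
qed

lemma locally_lipschitz_at_const: "locally_lipschitz_at (\<lambda>x. c) p"
  unfolding locally_lipschitz_at_def by (intro exI [of _ 1] exI [of _ 0]) (auto intro: lipschitz_intros)

lemma locally_lipschitz_at_bounded_linear: "bounded_linear g \<Longrightarrow> locally_lipschitz_at g p"
  unfolding locally_lipschitz_at_def
  by (metis bounded_linear.lipschitz_boundE zero_less_one)

lemma locally_lipschitz_at_compose:
  assumes f: "locally_lipschitz_at f p" and g: "locally_lipschitz_at g (f p)"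
  shows "locally_lipschitz_at (\<lambda>x. g (f x)) p"
proof -
  obtain e C where e: "e > 0" and f_lip: "C-lipschitz_on (ball p e) f"
    using f unfolding locally_lipschitz_at_def by blast
  obtain e' D where e': "e' > 0" and g_lip: "D-lipschitz_on (ball (f p) e') g"
    using g unfolding locally_lipschitz_at_def by blast
  have C: "C \<ge> 0" using f_lip lipschitz_on_nonneg by blast
  define e2 where "e2 = min e (e' / (C + 1))"
  have e2: "e2 > 0" using e e' C unfolding e2_def by simp
  have "f ` ball p e2 \<subseteq> ball (f p) e'"
  proof clarify
    fix x assume x: "x \<in> ball p e2"
    have "dist (f p) (f x) \<le> C * dist p x"
      using lipschitz_onD [OF f_lip] x e2 by (auto simp: e2_def)
    also have "\<dots> \<le> C * (e' / (C + 1))"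
      using x C by (intro mult_left_mono) (auto simp: e2_def)
    also have "\<dots> < e'" using C e' by (simp add: field_simps)
    finally show "f x \<in> ball (f p) e'" by simp
  qed
  then have "(D * C)-lipschitz_on (ball p e2) (\<lambda>x. g (f x))"
    by (intro lipschitz_on_compose2 [OF lipschitz_on_smaller_ball [OF f_lip]] lipschitz_on_subset [OF g_lip])
      (auto simp: e2_def)
  then show ?thesis unfolding locally_lipschitz_at_def using e2 by blast
qed

lemma locally_lipschitz_at_add:
  fixes f g :: "'a::metric_space \<Rightarrow> 'b::real_normed_vector"
  assumes "locally_lipschitz_at f p" "locally_lipschitz_at g p"
  shows "locally_lipschitz_at (\<lambda>x. f x + g x) p"
  using locally_lipschitz_at_common_ball [OF assms] unfolding locally_lipschitz_at_def
  by (metis lipschitz_on_add)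

lemma locally_lipschitz_at_minus:
  fixes f :: "'a::metric_space \<Rightarrow> 'b::real_normed_vector"
  shows "locally_lipschitz_at f p \<Longrightarrow> locally_lipschitz_at (\<lambda>x. - f x) p"
  unfolding locally_lipschitz_at_def by (auto intro: lipschitz_on_minus)

lemma locally_lipschitz_at_diff:
  fixes f g :: "'a::metric_space \<Rightarrow> 'b::real_normed_vector"
  assumes "locally_lipschitz_at f p" "locally_lipschitz_at g p"
  shows "locally_lipschitz_at (\<lambda>x. f x - g x) p"
  using locally_lipschitz_at_add [OF assms(1) locally_lipschitz_at_minus [OF assms(2)]] by simp

lemma locally_lipschitz_at_mult:
  fixes f g :: "'a::metric_space \<Rightarrow> 'b::real_normed_algebra"
  assumes "locally_lipschitz_at f p" "locally_lipschitz_at g p"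
  shows "locally_lipschitz_at (\<lambda>x. f x * g x) p"
proof -
  obtain e C D where e: "e > 0" and f_lip: "C-lipschitz_on (ball p e) f"
    and g_lip: "D-lipschitz_on (ball p e) g"
    using locally_lipschitz_at_common_ball [OF assms] by blast
  have CD: "C \<ge> 0" "D \<ge> 0" using f_lip g_lip lipschitz_on_nonneg by blast+
  define Mf where "Mf = norm (f p) + C * e"
  define Mg where "Mg = norm (g p) + D * e"
  have M: "Mf \<ge> 0" "Mg \<ge> 0" using CD e unfolding Mf_def Mg_def by auto
  have "(Mf * D + Mg * C)-lipschitz_on (ball p e) (\<lambda>x. f x * g x)"
  proof (rule lipschitz_onI)
    fix x y assume x: "x \<in> ball p e" and y: "y \<in> ball p e"
    have "f x * g x - f y * g y = f x * (g x - g y) + (f x - f y) * g y"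
      by (simp add: algebra_simps)
    then have "dist (f x * g x) (f y * g y) \<le> norm (f x) * norm (g x - g y) + norm (f x - f y) * norm (g y)"
      by (metis dist_norm norm_mult_ineq norm_triangle_le add_mono)
    also have "\<dots> \<le> Mf * (D * dist x y) + (C * dist x y) * Mg"
      using lipschitz_on_ball_norm_le [OF f_lip x] lipschitz_on_ball_norm_le [OF g_lip y]
        lipschitz_onD [OF f_lip x y] lipschitz_onD [OF g_lip x y] M CD
      by (intro add_mono mult_mono) (auto simp: Mf_def Mg_def dist_norm)
    finally show "dist (f x * g x) (f y * g y) \<le> (Mf * D + Mg * C) * dist x y"
      by (simp add: algebra_simps)
  qed (use M CD in auto)
  then show ?thesis unfolding locally_lipschitz_at_def using e by blast
qed

lemma locally_lipschitz_at_inverse: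
  fixes f :: "'a::metric_space \<Rightarrow> 'b::real_normed_field"
  assumes "locally_lipschitz_at f p" "f p \<noteq> 0"
  shows "locally_lipschitz_at (\<lambda>x. inverse (f x)) p"
proof -
  obtain e C where e: "e > 0" and f_lip: "C-lipschitz_on (ball p e) f"
    using assms unfolding locally_lipschitz_at_def by blast
  have C: "C \<ge> 0" using f_lip lipschitz_on_nonneg by blast
  define m where "m = norm (f p)"
  have m: "m > 0" using assms unfolding m_def by simp
  define e2 where "e2 = min e (m / (2 * (C + 1)))"
  have e2: "e2 > 0" using e m C unfolding e2_def by simp
  have f_lip2: "C-lipschitz_on (ball p e2) f"
    by (rule lipschitz_on_smaller_ball [OF f_lip]) (simp add: e2_def)
  have p: "p \<in> ball p e2" using e2 by simp
  have lower: "norm (f x) \<ge> m / 2" if x: "x \<in> ball p e2" for x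
  proof -
    have "dist (f x) (f p) \<le> C * dist x p" by (rule lipschitz_onD [OF f_lip2 x p])
    also have "\<dots> \<le> C * (m / (2 * (C + 1)))"
      using x C by (intro mult_left_mono) (auto simp: e2_def dist_commute)
    also have "\<dots> \<le> m / 2" using C m by (simp add: field_simps)
    finally show ?thesis
      using norm_triangle_sub [of "f p" "f x"] unfolding m_def
      by (simp add: dist_norm norm_minus_commute)
  qed
  have "(C * 4 / m\<^sup>2)-lipschitz_on (ball p e2) (\<lambda>x. inverse (f x))"
  proof (rule lipschitz_onI)
    fix x y assume x: "x \<in> ball p e2" and y: "y \<in> ball p e2"
    have "f x \<noteq> 0" "f y \<noteq> 0" using lower [OF x] lower [OF y] m by auto
    then have "dist (inverse (f x)) (inverse (f y)) = norm (f y - f x) / (norm (f x) * norm (f y))"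
      by (simp add: dist_norm inverse_diff_inverse norm_divide norm_mult field_simps)
    also have "\<dots> \<le> (C * dist x y) / ((m / 2) * (m / 2))"
      using lipschitz_onD [OF f_lip2 y x] lower [OF x] lower [OF y] m C
      by (intro frac_le mult_mono) (auto simp: dist_commute dist_norm norm_minus_commute)
    also have "\<dots> = (C * 4 / m\<^sup>2) * dist x y" by (simp add: field_simps power2_eq_square)
    finally show "dist (inverse (f x)) (inverse (f y)) \<le> (C * 4 / m\<^sup>2) * dist x y" .
  qed (use C m in auto)
  then show ?thesis unfolding locally_lipschitz_at_def using e2 by blast
qed

lemma locally_lipschitz_at_divide:
  fixes f g :: "'a::metric_space \<Rightarrow> 'b::real_normed_field"
  assumes "locally_lipschitz_at f p" "locally_lipschitz_at g p" "g p \<noteq> 0"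
  shows "locally_lipschitz_at (\<lambda>x. f x / g x) p"
  using locally_lipschitz_at_mult [OF assms(1) locally_lipschitz_at_inverse [OF assms(2,3)]]
  by (simp add: divide_inverse)

lemma locally_lipschitz_at_Pair:
  assumes "locally_lipschitz_at f p" "locally_lipschitz_at g p"
  shows "locally_lipschitz_at (\<lambda>x. (f x, g x)) p"
  using locally_lipschitz_at_common_ball [OF assms] unfolding locally_lipschitz_at_def
  by (metis lipschitz_on_Pair)

lemma locally_lipschitz_at_vec:
  fixes f :: "'a::metric_space \<Rightarrow> real^'n"
  assumes "\<And>i. locally_lipschitz_at (\<lambda>x. f x $ i) p"
  shows "locally_lipschitz_at f p"
proof -
  obtain E Cf where E: "\<And>i. E i > 0" and Cf: "\<And>i. (Cf i)-lipschitz_on (ball p (E i)) (\<lambda>x. f x $ i)"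
    using assms unfolding locally_lipschitz_at_def by metis
  define e where "e = Min (range E)"
  have e: "e > 0" unfolding e_def using E by (subst Min_gr_iff) auto
  have Ci: "(Cf i)-lipschitz_on (ball p e) (\<lambda>x. f x $ i)" for i
    by (rule lipschitz_on_smaller_ball [OF Cf]) (simp add: e_def)
  have "(\<Sum>i\<in>UNIV. Cf i)-lipschitz_on (ball p e) f"
  proof (rule lipschitz_onI)
    fix x y assume x: "x \<in> ball p e" and y: "y \<in> ball p e"
    have "dist (f x) (f y) \<le> (\<Sum>i\<in>UNIV. \<bar>(f x - f y) $ i\<bar>)"
      unfolding dist_norm by (rule norm_le_l1_cart)
    also have "\<dots> \<le> (\<Sum>i\<in>UNIV. Cf i * dist x y)"
      using lipschitz_onD [OF Ci x y] by (intro sum_mono) (simp add: dist_real_def)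
    finally show "dist (f x) (f y) \<le> (\<Sum>i\<in>UNIV. Cf i) * dist x y"
      by (simp add: sum_distrib_right)
  qed (use Ci lipschitz_on_nonneg in \<open>blast intro: sum_nonneg\<close>)
  then show ?thesis unfolding locally_lipschitz_at_def using e by blast
qed

lemmas locally_lipschitz_at_intros =
  locally_lipschitz_at_const locally_lipschitz_at_add locally_lipschitz_at_minus
  locally_lipschitz_at_diff locally_lipschitz_at_mult locally_lipschitz_at_divide
  locally_lipschitz_at_Pair

section \<open>Holomorphic functions of two variables are locally Lipschitz\<close>

lemma field_derivative_norm_le_Cauchy:
  fixes g :: "complex \<Rightarrow> complex"
  assumes diff: "\<And>t. t \<in> cball c r \<Longrightarrow> g field_differentiable (at t)" and "r > 0"
    and bound: "\<And>t. t \<in> cball c r \<Longrightarrow> norm (g t) \<le> M"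
    and deriv: "(g has_field_derivative d) (at c)"
  shows "norm d \<le> M / r"
proof -
  have "g holomorphic_on ball c r"
    using diff by (simp add: holomorphic_on_def field_differentiable_at_within)
  moreover have "continuous_on (cball c r) g"
    using diff by (simp add: continuous_at_imp_continuous_on field_differentiable_imp_continuous_at)
  ultimately have "norm ((deriv ^^ 1) g c) \<le> fact 1 * M / r ^ 1"
    by (rule Cauchy_inequality) (use assms in \<open>auto simp: dist_norm\<close>)
  then show ?thesis using DERIV_imp_deriv [OF deriv] by simp
qed

lemma complex_linear_Pair_decomp:
  assumes "linear D" and "\<forall>c::complex. \<forall>v. D (c * fst v, c * snd v) = c * D v"
  shows "D v = fst v * D (1, 0) + snd v * (D (0, 1) :: complex)"
proof -
  have "D v = D (fst v, 0) + D (0, snd v)"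
    using linear_add [OF assms(1), of "(fst v, 0)" "(0, snd v)"] by simp
  also have "D (fst v, 0) = fst v * D (1, 0)"
    using assms(2) [rule_format, of "fst v" "(1, 0)"] by simp
  also have "D (0, snd v) = snd v * D (0, 1)"
    using assms(2) [rule_format, of "snd v" "(0, 1)"] by simp
  finally show ?thesis .
qed

lemma holomorphic2_partial_derivatives:
  assumes D: "(h has_derivative D) (at (a, b))"
    and complex_linear: "\<forall>c::complex. \<forall>v. D (c * fst v, c * snd v) = c * D v"
  shows "((\<lambda>t. h (t, b)) has_field_derivative D (1, 0)) (at a)"
    and "((\<lambda>t. h (a, t)) has_field_derivative D (0, 1)) (at b)"
proof -
  have "((\<lambda>t. (t, b)) has_derivative (\<lambda>t. (t, 0))) (at a)"
    by (auto intro!: derivative_eq_intros)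
  from has_derivative_compose [OF this D]
  have "((\<lambda>t. h (t, b)) has_derivative (\<lambda>t. D (t, 0))) (at a)" .
  moreover have "(\<lambda>t. D (t, 0)) = (\<lambda>t. D (1, 0) * t)"
  proof
    fix t show "D (t, 0) = D (1, 0) * t"
      using complex_linear [rule_format, of t "(1, 0)"] by (simp add: mult.commute)
  qed
  ultimately show "((\<lambda>t. h (t, b)) has_field_derivative D (1, 0)) (at a)"
    by (simp add: has_field_derivative_def)
  have "((\<lambda>t. (a, t)) has_derivative (\<lambda>t. (0, t))) (at b)"
    by (auto intro!: derivative_eq_intros)
  from has_derivative_compose [OF this D]
  have "((\<lambda>t. h (a, t)) has_derivative (\<lambda>t. D (0, t))) (at b)" .
  moreover have "(\<lambda>t. D (0, t)) = (\<lambda>t. D (0, 1) * t)"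
  proof
    fix t show "D (0, t) = D (0, 1) * t"
      using complex_linear [rule_format, of t "(0, 1)"] by (simp add: mult.commute)
  qed
  ultimately show "((\<lambda>t. h (a, t)) has_field_derivative D (0, 1)) (at b)"
    by (simp add: has_field_derivative_def)
qed

lemma holomorphic2_on_slices:
  assumes "holomorphic2_on h U" "(a, b) \<in> U"
  shows "(\<lambda>t. h (t, b)) field_differentiable (at a)" and "(\<lambda>t. h (a, t)) field_differentiable (at b)"
proof -
  obtain D where "(h has_derivative D) (at (a, b))" "\<forall>c v. D (c * fst v, c * snd v) = c * D v"
    using assms unfolding holomorphic2_on_def by blast
  from holomorphic2_partial_derivatives [OF this]
  show "(\<lambda>t. h (t, b)) field_differentiable (at a)" and "(\<lambda>t. h (a, t)) field_differentiable (at b)"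
    unfolding field_differentiable_def by blast+
qed

lemma holomorphic2_derivative_bound:
  assumes hol: "holomorphic2_on h U" and sub: "cball w r \<subseteq> U" and "r > 0"
    and bound: "\<And>y. y \<in> cball w r \<Longrightarrow> norm (h y) \<le> M"
    and D: "(h has_derivative D) (at w)" "\<forall>c::complex. \<forall>v. D (c * fst v, c * snd v) = c * D v"
  shows "norm (D v) \<le> 2 * M / r * norm v"
proof -
  obtain a b where w: "w = (a, b)" by fastforce
  have slices: "(t, b) \<in> cball w r" "(a, t') \<in> cball w r" if "t \<in> cball a r" "t' \<in> cball b r" for t t'
    using that by (auto simp: w dist_Pair_Pair)
  have d1: "norm (D (1, 0)) \<le> M / r"
  proof (rule field_derivative_norm_le_Cauchy [OF _ \<open>r > 0\<close>])
    show "(\<lambda>t. h (t, b)) field_differentiable (at t)" if "t \<in> cball a r" for t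
      using slices [OF that, of b] sub \<open>r > 0\<close> by (intro holomorphic2_on_slices [OF hol]) auto
    show "norm (h (t, b)) \<le> M" if "t \<in> cball a r" for t
      using bound slices [OF that, of b] \<open>r > 0\<close> by simp
  qed (rule holomorphic2_partial_derivatives(1) [OF D [unfolded w]])
  have d2: "norm (D (0, 1)) \<le> M / r"
  proof (rule field_derivative_norm_le_Cauchy [OF _ \<open>r > 0\<close>])
    show "(\<lambda>t. h (a, t)) field_differentiable (at t)" if "t \<in> cball b r" for t
      using slices [OF _ that, of a] sub \<open>r > 0\<close> by (intro holomorphic2_on_slices [OF hol]) auto
    show "norm (h (a, t)) \<le> M" if "t \<in> cball b r" for t
      using bound slices [OF _ that, of a] \<open>r > 0\<close> by simp
  qed (rule holomorphic2_partial_derivatives(2) [OF D [unfolded w]])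
  have "D v = fst v * D (1, 0) + snd v * D (0, 1)"
    using complex_linear_Pair_decomp [OF has_derivative_linear [OF D(1)] D(2)] .
  then have "norm (D v) \<le> norm (fst v) * norm (D (1, 0)) + norm (snd v) * norm (D (0, 1))"
    using norm_triangle_ineq [of "fst v * D (1, 0)" "snd v * D (0, 1)"] by (simp add: norm_mult)
  also have "\<dots> \<le> norm v * (M / r) + norm v * (M / r)"
    using d1 d2 norm_fst_le [of "fst v" "snd v"] norm_snd_le [of "snd v" "fst v"]
    by (intro add_mono mult_mono) auto
  finally show ?thesis by (simp add: algebra_simps)
qed

lemma holomorphic2_on_imp_locally_lipschitz_at:
  assumes "open U" and hol: "holomorphic2_on h U" and "z \<in> U"
  shows "locally_lipschitz_at h z"
proof -
  obtain R where "R > 0" "cball z R \<subseteq> U" using assms open_contains_cball by blast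
  define r where "r = R / 2"
  have r: "r > 0" "cball z (2 * r) \<subseteq> U" using \<open>R > 0\<close> \<open>cball z R \<subseteq> U\<close> by (auto simp: r_def)
  obtain Df where Df: "\<And>w. w \<in> U \<Longrightarrow> (h has_derivative Df w) (at w)"
    "\<And>w. w \<in> U \<Longrightarrow> \<forall>c::complex. \<forall>v. Df w (c * fst v, c * snd v) = c * Df w v"
    using hol unfolding holomorphic2_on_def by metis
  have "continuous_on U h"
    using Df(1) has_derivative_continuous by (blast intro: continuous_at_imp_continuous_on)
  then have "bounded (h ` cball z (2 * r))"
    using r by (intro compact_imp_bounded compact_continuous_image) (auto elim: continuous_on_subset)
  then obtain M where M: "\<And>y. y \<in> cball z (2 * r) \<Longrightarrow> norm (h y) \<le> M"
    unfolding bounded_iff by blast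
  have ball_sub: "cball w r \<subseteq> cball z (2 * r)" if "w \<in> ball z r" for w
  proof
    fix y assume "y \<in> cball w r"
    then show "y \<in> cball z (2 * r)" using that dist_triangle [of z y w] by simp
  qed
  have in_U: "w \<in> U" if "w \<in> ball z r" for w
    using ball_sub [OF that] r centre_in_cball [of w r] by (meson less_imp_le subsetD)
  have "(2 * M / r)-lipschitz_on (ball z r) h"
  proof (rule bounded_derivative_imp_lipschitz)
    show "(h has_derivative Df w) (at w within ball z r)" if "w \<in> ball z r" for w
      using Df(1) [OF in_U [OF that]] by (rule has_derivative_at_withinI)
    show "onorm (Df w) \<le> 2 * M / r" if "w \<in> ball z r" for w
    proof (rule onorm_le)
      show "norm (Df w v) \<le> 2 * M / r * norm v" for v
        using ball_sub [OF that] r M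
        by (intro holomorphic2_derivative_bound [OF hol _ r(1) _ Df [OF in_U [OF that]]]) auto
    qed
    show "0 \<le> 2 * M / r"
      using order_trans [OF norm_ge_zero M [of z]] r by simp
  qed auto
  then show ?thesis unfolding locally_lipschitz_at_def using r by blast
qed

lemma locally_lipschitz_at_vec_nth: "locally_lipschitz_at (\<lambda>p::real^'n. p $ i) q"
  by (rule locally_lipschitz_at_bounded_linear) (rule bounded_linear_vec_nth)

lemma locally_lipschitz_at_bounded_linear_compose:
  assumes "bounded_linear g" "locally_lipschitz_at f p"
  shows "locally_lipschitz_at (\<lambda>x. g (f x)) p"
  using locally_lipschitz_at_compose [OF assms(2) locally_lipschitz_at_bounded_linear [OF assms(1)]] .

lemmas locally_lipschitz_at_of_real =
  locally_lipschitz_at_bounded_linear_compose [OF bounded_linear_of_real]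

lemma locally_lipschitz_at_stereo_scale: "locally_lipschitz_at stereo_scale p"
proof -
  have "locally_lipschitz_at (\<lambda>p::real^3. 1 / (1 + p$1 * p$1 + p$2 * p$2 + p$3 * p$3)) p"
    using stereo_denominator_nonzero [of p]
    by (intro locally_lipschitz_at_intros locally_lipschitz_at_vec_nth) (simp add: power2_eq_square)
  then show ?thesis unfolding stereo_scale_def [abs_def] by (simp add: power2_eq_square)
qed

lemma locally_lipschitz_at_phi: "locally_lipschitz_at phi p"
  unfolding phi_def [abs_def] alpha_zero beta_zero Complex_eq
  by (intro locally_lipschitz_at_intros locally_lipschitz_at_vec_nth locally_lipschitz_at_of_real
      locally_lipschitz_at_stereo_scale)

lemma locally_lipschitz_at_dphi:
  "locally_lipschitz_at (\<lambda>q. dalpha0 q v) p" "locally_lipschitz_at (\<lambda>q. dbeta0 q v) p"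
  unfolding dalpha0_def dbeta0_def inner_vec3 Complex_eq power2_eq_square
  by (intro locally_lipschitz_at_intros locally_lipschitz_at_vec_nth locally_lipschitz_at_of_real
      locally_lipschitz_at_stereo_scale)+

lemma locally_lipschitz_at_ccross:
  assumes "\<And>k. locally_lipschitz_at (\<lambda>q. a q $ k) p" "\<And>k. locally_lipschitz_at (\<lambda>q. b q $ k) p"
  shows "locally_lipschitz_at (\<lambda>q. ccross (a q) (b q) $ i) p"
  using exhaust_3 [of i]
  by (elim disjE) (simp_all add: ccross_def locally_lipschitz_at_diff locally_lipschitz_at_mult assms)

lemma field_locally_lipschitz_at:
  assumes "open U" and "S3 \<subseteq> U" and "holomorphic2_on h U"
    and field: "V = Efield h 0 \<or> V = Bfield h 0"
  shows "locally_lipschitz_at V p"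
proof -
  obtain f where f: "f = Re \<or> f = Im"
    and V: "\<And>q. V q = (\<chi> i. f (h (phi q) * ccross (cgrad (alpha 0) q) (cgrad (beta 0) q) $ i))"
    by (rule Efield_Bfield_zero_cases [OF field]) (rule that)
  have "bounded_linear f" using f by (auto intro: bounded_linear_Re bounded_linear_Im)
  have h_phi: "locally_lipschitz_at (\<lambda>q. h (phi q)) p"
    using holomorphic2_on_imp_locally_lipschitz_at [OF assms(1,3)] phi_in_S3 assms(2)
    by (intro locally_lipschitz_at_compose [OF locally_lipschitz_at_phi]) blast
  have "locally_lipschitz_at (\<lambda>q. cgrad (alpha 0) q $ k) p" "locally_lipschitz_at (\<lambda>q. cgrad (beta 0) q $ k) p" for k
    unfolding cgrad_eq [OF has_derivative_alpha_zero] cgrad_eq [OF has_derivative_beta_zero]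
    by (simp_all add: locally_lipschitz_at_dphi)
  then show ?thesis
    unfolding V [abs_def]
    by (intro locally_lipschitz_at_vec, simp only: vec_lambda_beta,
        intro locally_lipschitz_at_bounded_linear_compose [OF \<open>bounded_linear f\<close>]
        locally_lipschitz_at_mult h_phi locally_lipschitz_at_ccross)
qed

section \<open>Uniqueness of integral curves of a Lipschitz field\<close>

lemma has_real_derivative_inner_self:
  fixes d :: "real \<Rightarrow> 'a::real_inner"
  assumes "(d has_vector_derivative d') (at u)"
  shows "((\<lambda>u. d u \<bullet> d u) has_real_derivative 2 * (d u \<bullet> d')) (at u)"
proof -
  have "((\<lambda>u. d u \<bullet> d u) has_derivative (\<lambda>t. d u \<bullet> (t *\<^sub>R d') + (t *\<^sub>R d') \<bullet> d u)) (at u)"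
    using assms unfolding has_vector_derivative_def by (intro has_derivative_inner)
  moreover have "(\<lambda>t. d u \<bullet> (t *\<^sub>R d') + (t *\<^sub>R d') \<bullet> d u) = (*) (2 * (d u \<bullet> d'))"
    by (auto simp: inner_commute algebra_simps)
  ultimately show ?thesis unfolding has_field_derivative_def by simp
qed

text \<open>Gronwall's argument: \<open>g = |\<eta>\<^sub>1 - \<eta>\<^sub>2|\<^sup>2\<close> satisfies \<open>g' \<le> 2 C g\<close>,
  so \<open>exp (-2 C u) g u\<close> is nonincreasing and vanishes with \<open>g u\<^sub>0\<close>.\<close>
lemma lipschitz_ode_solutions_unique_forward:
  fixes W :: "'a::real_inner \<Rightarrow> 'a"
  assumes lip: "C-lipschitz_on X W" and "u0 \<le> u1"
    and sol: "\<And>u. u \<in> {u0..u1} \<Longrightarrow>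
      (\<eta>1 has_vector_derivative W (\<eta>1 u)) (at u) \<and> (\<eta>2 has_vector_derivative W (\<eta>2 u)) (at u) \<and>
      \<eta>1 u \<in> X \<and> \<eta>2 u \<in> X"
    and start: "\<eta>1 u0 = \<eta>2 u0"
  shows "\<eta>1 u1 = \<eta>2 u1"
proof -
  define d where "d u = \<eta>1 u - \<eta>2 u" for u
  define g where "g u = d u \<bullet> d u" for u
  define g' where "g' u = 2 * (d u \<bullet> (W (\<eta>1 u) - W (\<eta>2 u)))" for u
  have g_deriv: "(g has_real_derivative g' u) (at u)" if "u \<in> {u0..u1}" for u
    unfolding g_def g'_def d_def
    using sol [OF that] by (intro has_real_derivative_inner_self has_vector_derivative_diff) auto
  have g'_le: "g' u \<le> 2 * C * g u" if "u \<in> {u0..u1}" for u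
  proof -
    have "d u \<bullet> (W (\<eta>1 u) - W (\<eta>2 u)) \<le> norm (d u) * norm (W (\<eta>1 u) - W (\<eta>2 u))"
      by (rule norm_cauchy_schwarz)
    also have "\<dots> \<le> norm (d u) * (C * norm (d u))"
      using lipschitz_onD [OF lip, of "\<eta>1 u" "\<eta>2 u"] sol [OF that]
      by (intro mult_left_mono) (auto simp: d_def dist_norm)
    finally show ?thesis
      by (simp add: g'_def g_def power2_norm_eq_inner [symmetric] power2_eq_square algebra_simps)
  qed
  define G where "G u = exp (- 2 * C * u) * g u" for u
  have "G u1 \<le> G u0"
  proof (rule DERIV_nonpos_imp_nonincreasing [OF \<open>u0 \<le> u1\<close>])
    fix x assume x: "u0 \<le> x" "x \<le> u1"
    have "(G has_real_derivative exp (- 2 * C * x) * (g' x - 2 * C * g x)) (at x)"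
      unfolding G_def [abs_def] using x
      by (auto intro!: derivative_eq_intros g_deriv simp: algebra_simps)
    moreover have "exp (- 2 * C * x) * (g' x - 2 * C * g x) \<le> 0"
      using g'_le [of x] x by (simp add: mult_nonneg_nonpos)
    ultimately show "\<exists>y. (G has_real_derivative y) (at x) \<and> y \<le> 0" by blast
  qed
  then have "g u1 \<le> 0"
    using start by (simp add: G_def g_def d_def mult_le_0_iff)
  then have "d u1 \<bullet> d u1 = 0"
    using inner_ge_zero [of "d u1"] unfolding g_def by linarith
  then show ?thesis by (simp add: d_def)
qed

lemma lipschitz_ode_solutions_unique:
  fixes W :: "'a::real_inner \<Rightarrow> 'a"
  assumes lip: "C-lipschitz_on X W"
    and sol: "\<And>u. u \<in> closed_segment u0 u1 \<Longrightarrow>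
      (\<eta>1 has_vector_derivative W (\<eta>1 u)) (at u) \<and> (\<eta>2 has_vector_derivative W (\<eta>2 u)) (at u) \<and>
      \<eta>1 u \<in> X \<and> \<eta>2 u \<in> X"
    and start: "\<eta>1 u0 = \<eta>2 u0"
  shows "\<eta>1 u1 = \<eta>2 u1"
proof (cases "u0 \<le> u1")
  case True
  show ?thesis
  proof (rule lipschitz_ode_solutions_unique_forward [OF lip True])
    show "\<eta>1 u0 = \<eta>2 u0" by (rule start)
  qed (use sol True in \<open>auto simp: closed_segment_eq_real_ivl\<close>)
next
  case False
  have reversed: "((\<lambda>u. \<eta> (- u)) has_vector_derivative - W (\<eta> (- u))) (at u)"
    if "(\<eta> has_vector_derivative W (\<eta> (- u))) (at (- u))" for \<eta> :: "real \<Rightarrow> 'a" and u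
    using vector_diff_chain_at [OF has_vector_derivative_minus [OF has_vector_derivative_id] that]
    by (simp add: o_def)
  have "((\<lambda>u. \<eta>1 (- u)) has_vector_derivative - W (\<eta>1 (- u))) (at u) \<and>
      ((\<lambda>u. \<eta>2 (- u)) has_vector_derivative - W (\<eta>2 (- u))) (at u) \<and>
      \<eta>1 (- u) \<in> X \<and> \<eta>2 (- u) \<in> X" if "u \<in> {- u0..- u1}" for u
  proof -
    have "- u \<in> closed_segment u0 u1"
      using that False by (auto simp: closed_segment_eq_real_ivl)
    then show ?thesis using sol reversed by auto
  qed
  then show ?thesis
    using lipschitz_ode_solutions_unique_forward [OF lipschitz_on_minus [OF lip],
        of "- u0" "- u1" "\<lambda>u. \<eta>1 (- u)" "\<lambda>u. \<eta>2 (- u)"] start False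
    by simp
qed

lemma local_inverse_increasing:
  fixes f f' :: "real \<Rightarrow> real"
  assumes der: "\<And>s. (f has_real_derivative f' s) (at s)"
    and "c < e" and pos: "\<And>s. s \<in> {c..e} \<Longrightarrow> f' s > 0"
  obtains \<sigma> where
    "\<And>u. u \<in> {f c<..<f e} \<Longrightarrow> (\<sigma> has_real_derivative inverse (f' (\<sigma> u))) (at u) \<and> f (\<sigma> u) = u"
    "\<And>s. s \<in> {c<..<e} \<Longrightarrow> f s \<in> {f c<..<f e} \<and> \<sigma> (f s) = s"
proof -
  have mono: "f x < f y" if "c \<le> x" "x < y" "y \<le> e" for x y
    by (rule DERIV_pos_imp_increasing [OF that(2)]) (use der pos that in force)
  have cont: "isCont f x" for x using der DERIV_isCont by blast
  define \<sigma> where "\<sigma> = inv_into {c..e} f"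
  have "inj_on f {c..e}"
  proof (rule inj_onI)
    fix x y assume "x \<in> {c..e}" "y \<in> {c..e}" "f x = f y"
    then show "x = y" using mono [of x y] mono [of y x] by (cases x y rule: linorder_cases) auto
  qed
  then have \<sigma>_f: "\<sigma> (f s) = s" if "s \<in> {c..e}" for s
    unfolding \<sigma>_def by (rule inv_into_f_f) (rule that)
  have onto: "\<exists>s\<in>{c<..<e}. f s = u" if u: "u \<in> {f c<..<f e}" for u
  proof -
    obtain s where s: "c \<le> s" "s \<le> e" "f s = u"
      using IVT [of f c u e] u \<open>c < e\<close> cont by auto
    then have "s \<noteq> c" "s \<noteq> e" using u by auto
    with s show ?thesis by auto
  qed
  have inverse: "f s \<in> {f c<..<f e} \<and> \<sigma> (f s) = s" if "s \<in> {c<..<e}" for s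
    using mono [of c s] mono [of s e] \<sigma>_f [of s] that by auto
  have "(\<sigma> has_real_derivative inverse (f' (\<sigma> u))) (at u) \<and> f (\<sigma> u) = u"
    if u: "u \<in> {f c<..<f e}" for u
  proof -
  obtain s where s: "s \<in> {c<..<e}" "f s = u" using onto u by blast
  then have \<sigma>u: "\<sigma> u = s" using \<sigma>_f [of s] by auto
  have "isCont \<sigma> (f s)"
    by (rule isCont_inverse_function2 [of c s e]) (use s \<sigma>_f cont in auto)
  have "(\<sigma> has_real_derivative inverse (f' (\<sigma> u))) (at u)"
  proof (rule DERIV_inverse_function [of f])
    show "(f has_real_derivative f' (\<sigma> u)) (at (\<sigma> u))" by (rule der)
    show "f' (\<sigma> u) \<noteq> 0" using pos [of "\<sigma> u"] \<sigma>u s by auto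
    show "f c < u" "u < f e" using u by auto
    show "f (\<sigma> y) = y" if y: "f c < y" "y < f e" for y
    proof -
      obtain t where "t \<in> {c<..<e}" "f t = y" using onto [of y] y by auto
      then show ?thesis using \<sigma>_f [of t] by auto
    qed
    show "isCont \<sigma> u" using \<open>isCont \<sigma> (f s)\<close> s by simp
  qed
  moreover have "f (\<sigma> u) = u" using \<sigma>u s by simp
  ultimately show ?thesis ..
  qed
  with inverse show thesis by (intro that)
qed

lemma local_inverse_real:
  fixes f f' :: "real \<Rightarrow> real"
  assumes der: "\<And>s. (f has_real_derivative f' s) (at s)"
    and cont: "continuous_on UNIV f'" and "f' s0 \<noteq> 0"
  obtains A B d \<sigma> where "A < f s0" "f s0 < B" "d > 0"
    "\<And>u. u \<in> {A<..<B} \<Longrightarrow> (\<sigma> has_real_derivative inverse (f' (\<sigma> u))) (at u) \<and> f (\<sigma> u) = u"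
    "\<And>s. \<bar>s - s0\<bar> < d \<Longrightarrow> f s \<in> {A<..<B} \<and> \<sigma> (f s) = s"
proof -
  have "isCont f' s0" using cont by (simp add: continuous_on_eq_continuous_at)
  then obtain \<delta> where \<delta>: "\<delta> > 0" "\<And>s. dist s s0 < \<delta> \<Longrightarrow> dist (f' s) (f' s0) < \<bar>f' s0\<bar>"
    using \<open>f' s0 \<noteq> 0\<close> unfolding continuous_at_eps_delta by (meson zero_less_abs_iff)
  define c where "c = s0 - \<delta> / 2"
  define e where "e = s0 + \<delta> / 2"
  have "c < e" "s0 \<in> {c<..<e}" using \<delta> by (auto simp: c_def e_def)
  have near: "\<bar>f' s - f' s0\<bar> < \<bar>f' s0\<bar>" if "s \<in> {c..e}" for s
    using \<delta> that by (auto simp: c_def e_def dist_real_def)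
  have within: "s \<in> {c<..<e}" if "\<bar>s - s0\<bar> < \<delta> / 2" for s
    using that unfolding c_def e_def greaterThanLessThan_iff by arith
  show ?thesis
  proof (cases "f' s0 > 0")
    case True
    have pos: "f' s > 0" if "s \<in> {c..e}" for s
      using near [OF that] True by arith
    from local_inverse_increasing [OF der \<open>c < e\<close> pos] obtain \<sigma> where \<sigma>:
      "\<And>u. u \<in> {f c<..<f e} \<Longrightarrow> (\<sigma> has_real_derivative inverse (f' (\<sigma> u))) (at u) \<and> f (\<sigma> u) = u"
      "\<And>s. s \<in> {c<..<e} \<Longrightarrow> f s \<in> {f c<..<f e} \<and> \<sigma> (f s) = s" by blast
    show ?thesis
    proof (rule that [of "f c" "f e" "\<delta> / 2" \<sigma>])
      have "f s0 \<in> {f c<..<f e}" using \<sigma>(2) [OF \<open>s0 \<in> {c<..<e}\<close>] ..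
      then show "f c < f s0" "f s0 < f e" by simp_all
      show "\<delta> / 2 > 0" using \<delta> by simp
      show "(\<sigma> has_real_derivative inverse (f' (\<sigma> u))) (at u) \<and> f (\<sigma> u) = u"
        if "u \<in> {f c<..<f e}" for u
        using \<sigma>(1) [OF that] .
      show "f s \<in> {f c<..<f e} \<and> \<sigma> (f s) = s" if "\<bar>s - s0\<bar> < \<delta> / 2" for s
        using \<sigma>(2) [OF within [OF that]] .
    qed
  next
    case False
    have neg: "- f' s > 0" if "s \<in> {c..e}" for s
      using near [OF that] False \<open>f' s0 \<noteq> 0\<close> by arith
    have der': "((\<lambda>s. - f s) has_real_derivative - f' s) (at s)" for s
      using der by (auto intro!: derivative_eq_intros)
    obtain \<sigma> where \<sigma>:
      "\<And>u. u \<in> {- f c<..<- f e} \<Longrightarrow>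
        (\<sigma> has_real_derivative inverse (- f' (\<sigma> u))) (at u) \<and> - f (\<sigma> u) = u"
      "\<And>s. s \<in> {c<..<e} \<Longrightarrow> - f s \<in> {- f c<..<- f e} \<and> \<sigma> (- f s) = s"
      using local_inverse_increasing [OF der' \<open>c < e\<close> neg] by blast
    have \<sigma>'_deriv: "((\<lambda>u. \<sigma> (- u)) has_real_derivative inverse (f' (\<sigma> (- u)))) (at u) \<and> f (\<sigma> (- u)) = u"
      if "u \<in> {f e<..<f c}" for u
    proof -
      have "(\<sigma> has_real_derivative inverse (- f' (\<sigma> (- u)))) (at (- u))" "- f (\<sigma> (- u)) = - u"
        using \<sigma>(1) [of "- u"] that by auto
      moreover have "((\<lambda>u. - u) has_real_derivative - 1) (at u)"
        by (auto intro!: derivative_eq_intros)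
      ultimately show ?thesis
        using DERIV_chain2 [of \<sigma> _ "\<lambda>u. - u" u "- 1" UNIV] by (fastforce simp: inverse_minus_eq)
    qed
    have \<sigma>'_f: "f s \<in> {f e<..<f c} \<and> \<sigma> (- f s) = s" if "s \<in> {c<..<e}" for s
      using \<sigma>(2) [OF that] by auto
    show ?thesis
    proof (rule that [of "f e" "f c" "\<delta> / 2" "\<lambda>u. \<sigma> (- u)"])
      have "s0 \<in> {c<..<e}" by fact
      then have "f s0 \<in> {f e<..<f c}" using \<sigma>'_f by blast
      then show "f e < f s0" "f s0 < f c" by simp_all
      show "\<delta> / 2 > 0" using \<delta> by simp
      show "((\<lambda>u. \<sigma> (- u)) has_real_derivative inverse (f' (\<sigma> (- u)))) (at u) \<and> f (\<sigma> (- u)) = u"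
        if "u \<in> {f e<..<f c}" for u
        using \<sigma>'_deriv [OF that] .
      show "f s \<in> {f e<..<f c} \<and> \<sigma> (- f s) = s" if "\<bar>s - s0\<bar> < \<delta> / 2" for s
        using \<sigma>'_f [OF within [OF that]] .
    qed
  qed
qed

section \<open>Closed field lines through a common point\<close>

lemma closed_field_lineD:
  assumes "closed_field_line V \<gamma>"
  shows "(\<gamma> has_vector_derivative vector_derivative \<gamma> (at s)) (at s)"
    and "continuous_on UNIV (\<lambda>s. vector_derivative \<gamma> (at s))"
    and "\<exists>k. k \<noteq> 0 \<and> vector_derivative \<gamma> (at s) = k *\<^sub>R V (\<gamma> s)"
    and "V (\<gamma> s) \<noteq> 0"
    and "continuous_on UNIV \<gamma>"
proof -
  have diff: "\<forall>s. \<gamma> differentiable (at s)" and regular: "vector_derivative \<gamma> (at s) \<noteq> 0"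
    and field: "V (\<gamma> s) \<noteq> 0 \<and> (\<exists>k::real. vector_derivative \<gamma> (at s) = k *\<^sub>R V (\<gamma> s))"
    and "continuous_on UNIV (\<lambda>s. vector_derivative \<gamma> (at s))"
    using assms unfolding closed_field_line_def closed_embedded_curve_def by blast+
  then show "continuous_on UNIV (\<lambda>s. vector_derivative \<gamma> (at s))"
    and "(\<gamma> has_vector_derivative vector_derivative \<gamma> (at s)) (at s)"
    and "continuous_on UNIV \<gamma>"
    by (auto simp: vector_derivative_works differentiable_imp_continuous_within
        intro: continuous_at_imp_continuous_on)
  show "\<exists>k. k \<noteq> 0 \<and> vector_derivative \<gamma> (at s) = k *\<^sub>R V (\<gamma> s)"
    using field regular by force
  show "V (\<gamma> s) \<noteq> 0" using field by blast
qed

lemma periodic_add_int_multiple: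
  fixes T :: real
  assumes "\<forall>s. \<gamma> (s + T) = \<gamma> s"
  shows "\<gamma> (s + of_int n * T) = \<gamma> s"
proof (induction n arbitrary: s rule: int_induct [where k = 0])
  case (step1 n)
  then show ?case using assms [rule_format, of "s + of_int n * T"] by (simp add: algebra_simps)
next
  case (step2 n)
  then show ?case using assms [rule_format, of "s + of_int (n - 1) * T"] by (simp add: algebra_simps)
qed simp

lemma compact_range_closed_embedded_curve:
  assumes "closed_embedded_curve \<gamma>"
  shows "compact (range \<gamma>)"
proof -
  obtain T where T: "T > 0" "\<forall>s. \<gamma> (s + T) = \<gamma> s"
    using assms unfolding closed_embedded_curve_def by blast
  have "range \<gamma> \<subseteq> \<gamma> ` {0..T}"
  proof clarify
    fix s
    define n where "n = \<lfloor>s / T\<rfloor>"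
    have "of_int n \<le> s / T" "s / T < of_int n + 1" unfolding n_def by linarith+
    then have "of_int n * T \<le> s" "s < (of_int n + 1) * T"
      using T(1) by (simp_all add: field_simps)
    then have "s - of_int n * T \<in> {0..T}" by (auto simp: algebra_simps)
    moreover have "\<gamma> (s - of_int n * T) = \<gamma> s"
      using periodic_add_int_multiple [OF T(2), of "s - of_int n * T" n] by simp
    ultimately show "\<gamma> s \<in> \<gamma> ` {0..T}" by (metis image_eqI)
  qed
  then have "range \<gamma> = \<gamma> ` {0..T}" by auto
  then show ?thesis
    using closed_embedded_curveD(2) [OF assms]
    by (simp add: compact_continuous_image continuous_on_subset)
qed

text \<open>The field rescaled so that its \<open>j\<close>-th component is \<open>1\<close>: a field line of \<open>V\<close>,
  reparametrised by its own \<open>j\<close>-th coordinate, is an integral curve of it.\<close>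
definition rescale_field :: "(real^'n \<Rightarrow> real^'n) \<Rightarrow> 'n \<Rightarrow> real^'n \<Rightarrow> real^'n" where
  "rescale_field V j q = (\<chi> i. V q $ i / V q $ j)"

lemma locally_lipschitz_at_rescale_field:
  assumes "locally_lipschitz_at V p" "V p $ j \<noteq> 0"
  shows "locally_lipschitz_at (rescale_field V j) p"
proof -
  have "locally_lipschitz_at (\<lambda>q. V q $ i) p" for i
    using locally_lipschitz_at_compose [OF assms(1)
        locally_lipschitz_at_bounded_linear [OF bounded_linear_vec_nth]] by blast
  then show ?thesis
    unfolding rescale_field_def
    by (intro locally_lipschitz_at_vec) (simp add: locally_lipschitz_at_divide assms(2))
qed

lemma has_real_derivative_vec_nth:
  "(\<gamma> has_vector_derivative v) F \<Longrightarrow> ((\<lambda>s. \<gamma> s $ j) has_real_derivative v $ j) F"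
  using bounded_linear.has_vector_derivative [OF bounded_linear_vec_nth]
  by (simp add: has_real_derivative_iff_has_vector_derivative)

lemma closed_field_line_coordinate_chart:
  assumes line: "closed_field_line V \<gamma>" and nonzero: "V (\<gamma> s0) $ j \<noteq> 0"
  obtains A B d \<sigma> where "A < \<gamma> s0 $ j" "\<gamma> s0 $ j < B" "d > 0"
    "\<And>u. u \<in> {A<..<B} \<Longrightarrow> ((\<gamma> \<circ> \<sigma>) has_vector_derivative rescale_field V j ((\<gamma> \<circ> \<sigma>) u)) (at u)"
    "\<And>s. \<bar>s - s0\<bar> < d \<Longrightarrow> \<gamma> s $ j \<in> {A<..<B} \<and> \<sigma> (\<gamma> s $ j) = s"
proof -
  define g where "g s = vector_derivative \<gamma> (at s)" for s
  have deriv: "(\<gamma> has_vector_derivative g s) (at s)" for s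
    unfolding g_def by (rule closed_field_lineD(1) [OF line])
  have g_nonzero: "g s0 $ j \<noteq> 0"
    using closed_field_lineD(3) [OF line, of s0] nonzero by (auto simp: g_def)
  have g_cont: "continuous_on UNIV (\<lambda>s. g s $ j)"
    unfolding g_def by (intro continuous_on_component closed_field_lineD(2) [OF line])
  obtain A B d \<sigma> where AB: "A < \<gamma> s0 $ j" "\<gamma> s0 $ j < B" "d > 0"
    and \<sigma>: "\<And>u. u \<in> {A<..<B} \<Longrightarrow>
      (\<sigma> has_real_derivative inverse (g (\<sigma> u) $ j)) (at u) \<and> \<gamma> (\<sigma> u) $ j = u"
    and chart: "\<And>s. \<bar>s - s0\<bar> < d \<Longrightarrow> \<gamma> s $ j \<in> {A<..<B} \<and> \<sigma> (\<gamma> s $ j) = s"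
    by (rule local_inverse_real [OF has_real_derivative_vec_nth [OF deriv] g_cont g_nonzero]) (rule that)
  have integral: "((\<gamma> \<circ> \<sigma>) has_vector_derivative rescale_field V j ((\<gamma> \<circ> \<sigma>) u)) (at u)"
    if u: "u \<in> {A<..<B}" for u
  proof -
    have "(\<sigma> has_vector_derivative inverse (g (\<sigma> u) $ j)) (at u)"
      using \<sigma> [OF u] by (simp add: has_real_derivative_iff_has_vector_derivative)
    from vector_diff_chain_at [OF this deriv]
    have "((\<gamma> \<circ> \<sigma>) has_vector_derivative inverse (g (\<sigma> u) $ j) *\<^sub>R g (\<sigma> u)) (at u)" .
    moreover obtain k where "k \<noteq> 0" "g (\<sigma> u) = k *\<^sub>R V (\<gamma> (\<sigma> u))"
      using closed_field_lineD(3) [OF line] unfolding g_def by blast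
    then have "inverse (g (\<sigma> u) $ j) *\<^sub>R g (\<sigma> u) = rescale_field V j ((\<gamma> \<circ> \<sigma>) u)"
      by (simp add: rescale_field_def vec_eq_iff field_simps)
    ultimately show ?thesis by simp
  qed
  from AB integral chart show thesis by (rule that)
qed

lemma isCont_eventually_in_open:
  "isCont f x \<Longrightarrow> open S \<Longrightarrow> f x \<in> S \<Longrightarrow> \<forall>\<^sub>F y in nhds x. f y \<in> S"
  by (simp add: isCont_def tendsto_at_iff_tendsto_nhds topological_tendstoD)

lemma closed_field_lines_locally_coincide:
  fixes V :: "real^3 \<Rightarrow> real^3"
  assumes lip: "\<And>p. locally_lipschitz_at V p"
    and line1: "closed_field_line V \<gamma>1" and line2: "closed_field_line V \<gamma>2"
    and meet: "\<gamma>1 s1 = \<gamma>2 s2"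
  shows "\<forall>\<^sub>F s in nhds s1. \<gamma>1 s \<in> range \<gamma>2"
proof -
  obtain j where j1: "V (\<gamma>1 s1) $ j \<noteq> 0"
    using closed_field_lineD(4) [OF line1, of s1] by (auto simp: vec_eq_iff)
  then have j2: "V (\<gamma>2 s2) $ j \<noteq> 0" by (simp add: meet)
  obtain A1 B1 d1 \<sigma>1 where AB1: "A1 < \<gamma>1 s1 $ j" "\<gamma>1 s1 $ j < B1" "d1 > 0"
    and integral1: "\<And>u. u \<in> {A1<..<B1} \<Longrightarrow>
      ((\<gamma>1 \<circ> \<sigma>1) has_vector_derivative rescale_field V j ((\<gamma>1 \<circ> \<sigma>1) u)) (at u)"
    and chart1: "\<And>s. \<bar>s - s1\<bar> < d1 \<Longrightarrow> \<gamma>1 s $ j \<in> {A1<..<B1} \<and> \<sigma>1 (\<gamma>1 s $ j) = s"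
    by (rule closed_field_line_coordinate_chart [OF line1 j1]) (rule that)
  obtain A2 B2 d2 \<sigma>2 where AB2: "A2 < \<gamma>2 s2 $ j" "\<gamma>2 s2 $ j < B2" "d2 > 0"
    and integral2: "\<And>u. u \<in> {A2<..<B2} \<Longrightarrow>
      ((\<gamma>2 \<circ> \<sigma>2) has_vector_derivative rescale_field V j ((\<gamma>2 \<circ> \<sigma>2) u)) (at u)"
    and chart2: "\<And>s. \<bar>s - s2\<bar> < d2 \<Longrightarrow> \<gamma>2 s $ j \<in> {A2<..<B2} \<and> \<sigma>2 (\<gamma>2 s $ j) = s"
    by (rule closed_field_line_coordinate_chart [OF line2 j2]) (rule that)
  define p where "p = \<gamma>1 s1"
  define u0 where "u0 = p $ j"
  note AB1 = AB1 [folded p_def, folded u0_def]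
  note AB2 = AB2 [folded meet, folded p_def, folded u0_def]
  note j = j1 [folded p_def]
  have start1: "(\<gamma>1 \<circ> \<sigma>1) u0 = p" and start2: "(\<gamma>2 \<circ> \<sigma>2) u0 = p"
    using chart1 [of s1] chart2 [of s2] AB1 AB2 by (simp_all add: u0_def p_def meet)
  obtain e C where "e > 0" and lip_W: "C-lipschitz_on (ball p e) (rescale_field V j)"
    using locally_lipschitz_at_rescale_field [OF lip j] unfolding locally_lipschitz_at_def by blast
  have cont1: "isCont (\<gamma>1 \<circ> \<sigma>1) u0" and cont2: "isCont (\<gamma>2 \<circ> \<sigma>2) u0"
    using integral1 [of u0] integral2 [of u0] AB1 AB2 has_vector_derivative_continuous by auto
  have "\<forall>\<^sub>F u in nhds u0. u \<in> {A1<..<B1} \<and> u \<in> {A2<..<B2} \<and>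
      (\<gamma>1 \<circ> \<sigma>1) u \<in> ball p e \<and> (\<gamma>2 \<circ> \<sigma>2) u \<in> ball p e"
    using AB1 AB2 \<open>e > 0\<close> start1 start2
    by (intro eventually_conj eventually_nhds_in_open isCont_eventually_in_open [OF cont1]
        isCont_eventually_in_open [OF cont2]) auto
  then obtain r where "r > 0" and near: "\<And>u. dist u u0 < r \<Longrightarrow> u \<in> {A1<..<B1} \<and> u \<in> {A2<..<B2} \<and>
      (\<gamma>1 \<circ> \<sigma>1) u \<in> ball p e \<and> (\<gamma>2 \<circ> \<sigma>2) u \<in> ball p e"
    unfolding eventually_nhds_metric by blast
  have coincide: "(\<gamma>1 \<circ> \<sigma>1) u = (\<gamma>2 \<circ> \<sigma>2) u" if "dist u u0 < r" for u
  proof (rule lipschitz_ode_solutions_unique [OF lip_W, of u0 u "\<gamma>1 \<circ> \<sigma>1" "\<gamma>2 \<circ> \<sigma>2"])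
    show "(\<gamma>1 \<circ> \<sigma>1) u0 = (\<gamma>2 \<circ> \<sigma>2) u0" using start1 start2 by simp
  next
    fix v assume "v \<in> closed_segment u0 u"
    then have "dist v u0 < r" using dist_in_closed_segment [of v u0 u] that by (simp add: dist_commute)
    then show "((\<gamma>1 \<circ> \<sigma>1) has_vector_derivative rescale_field V j ((\<gamma>1 \<circ> \<sigma>1) v)) (at v) \<and>
      ((\<gamma>2 \<circ> \<sigma>2) has_vector_derivative rescale_field V j ((\<gamma>2 \<circ> \<sigma>2) v)) (at v) \<and>
      (\<gamma>1 \<circ> \<sigma>1) v \<in> ball p e \<and> (\<gamma>2 \<circ> \<sigma>2) v \<in> ball p e"
      using near integral1 integral2 by blast
  qed
  have "isCont (\<lambda>s. \<gamma>1 s $ j) s1"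
    using has_real_derivative_vec_nth [OF closed_field_lineD(1) [OF line1]] DERIV_isCont by blast
  then have "\<forall>\<^sub>F s in nhds s1. \<gamma>1 s $ j \<in> ball u0 r \<and> s \<in> ball s1 d1"
    using \<open>r > 0\<close> AB1 by (intro eventually_conj isCont_eventually_in_open eventually_nhds_in_open)
      (auto simp: u0_def p_def)
  then show ?thesis
  proof (rule eventually_mono)
    fix s assume s: "\<gamma>1 s $ j \<in> ball u0 r \<and> s \<in> ball s1 d1"
    then have "\<sigma>1 (\<gamma>1 s $ j) = s" using chart1 [of s] by (simp add: dist_real_def abs_minus_commute)
    then have "\<gamma>1 s = (\<gamma>1 \<circ> \<sigma>1) (\<gamma>1 s $ j)" by simp
    also have "\<dots> = (\<gamma>2 \<circ> \<sigma>2) (\<gamma>1 s $ j)" using coincide s by (simp add: dist_commute)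
    finally show "\<gamma>1 s \<in> range \<gamma>2" by simp
  qed
qed

lemma closed_field_lines_range_eq:
  fixes V :: "real^3 \<Rightarrow> real^3"
  assumes lip: "\<And>p. locally_lipschitz_at V p"
    and line1: "closed_field_line V \<gamma>1" and line2: "closed_field_line V \<gamma>2"
    and meet: "range \<gamma>1 \<inter> range \<gamma>2 \<noteq> {}"
  shows "range \<gamma>1 = range \<gamma>2"
proof -
  have subset: "range \<gamma> \<subseteq> range \<gamma>'"
    if line: "closed_field_line V \<gamma>" "closed_field_line V \<gamma>'" and "\<gamma> s = \<gamma>' s'" for \<gamma> \<gamma>' s s'
  proof -
    define S where "S = \<gamma> -` range \<gamma>'"
    have "closed S"
      unfolding S_def using line(2)
      by (intro closed_vimage compact_imp_closed compact_range_closed_embedded_curve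
          closed_field_lineD(5) [OF line(1)]) (simp add: closed_field_line_def)
    moreover have "open S"
    proof (rule open_subopen [THEN iffD2], intro ballI)
      fix t assume "t \<in> S"
      then obtain t' where "\<gamma> t = \<gamma>' t'" unfolding S_def by auto
      from closed_field_lines_locally_coincide [OF lip line this]
      show "\<exists>T. open T \<and> t \<in> T \<and> T \<subseteq> S"
        unfolding eventually_nhds S_def by blast
    qed
    moreover have "s \<in> S" unfolding S_def using that(3) by auto
    ultimately have "S = UNIV" using clopen [of S] by blast
    then show ?thesis unfolding S_def by auto
  qed
  from meet obtain s1 s2 where "\<gamma>1 s1 = \<gamma>2 s2" by auto
  then show ?thesis using subset [OF line1 line2] subset [OF line2 line1] by (metis subset_antisym)
qed

theorem lemma1:
  fixes h :: "complex \<times> complex \<Rightarrow> complex"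
    and U :: "(complex \<times> complex) set"
    and \<Gamma> :: "(real \<Rightarrow> real^3) set"
    and L :: "(real^3) set"
  assumes "open U" and "S3 \<subseteq> U" and "holomorphic2_on h U"
    and "finite \<Gamma>"
    and "L = (\<Union>\<gamma>\<in>\<Gamma>. range \<gamma>)"
    and "(\<forall>\<gamma>\<in>\<Gamma>. closed_field_line (Bfield h 0) \<gamma>) \<or> (\<forall>\<gamma>\<in>\<Gamma>. closed_field_line (Efield h 0) \<gamma>)"
  shows "legendrian_link (phi ` L)"
proof -
  obtain V where field: "V = Efield h 0 \<or> V = Bfield h 0" and lines: "\<forall>\<gamma>\<in>\<Gamma>. closed_field_line V \<gamma>"
    using assms(6) by blast
  have lip: "\<And>p. locally_lipschitz_at V p"
    by (rule field_locally_lipschitz_at [OF assms(1-3) field])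
  show ?thesis
    unfolding legendrian_link_def
  proof (intro exI [of _ "(\<lambda>\<gamma>. phi \<circ> \<gamma>) ` \<Gamma>"] conjI ballI allI)
    show "finite ((\<lambda>\<gamma>. phi \<circ> \<gamma>) ` \<Gamma>)" using assms(4) by simp
    show "phi ` L = (\<Union>c\<in>(\<lambda>\<gamma>. phi \<circ> \<gamma>) ` \<Gamma>. range c)"
      unfolding assms(5) by (auto simp: image_comp)
    fix c assume "c \<in> (\<lambda>\<gamma>. phi \<circ> \<gamma>) ` \<Gamma>"
    then obtain \<gamma> where "\<gamma> \<in> \<Gamma>" "c = phi \<circ> \<gamma>" by blast
    then show "closed_embedded_curve c" "range c \<subseteq> S3" "in_xi0 (c s) (vector_derivative c (at s))" for s
      using phi_comp_field_line_legendrian [OF field] lines by auto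
  next
    fix c1 c2 assume "c1 \<in> (\<lambda>\<gamma>. phi \<circ> \<gamma>) ` \<Gamma>" "c2 \<in> (\<lambda>\<gamma>. phi \<circ> \<gamma>) ` \<Gamma>"
    then obtain \<gamma>1 \<gamma>2 where "\<gamma>1 \<in> \<Gamma>" "\<gamma>2 \<in> \<Gamma>" and c: "c1 = phi \<circ> \<gamma>1" "c2 = phi \<circ> \<gamma>2"
      by blast
    then have "range \<gamma>1 \<inter> range \<gamma>2 \<noteq> {} \<Longrightarrow> range \<gamma>1 = range \<gamma>2"
      using closed_field_lines_range_eq [OF lip] lines by blast
    then show "range c1 = range c2 \<or> range c1 \<inter> range c2 = {}"
      unfolding c image_comp [symmetric] using inj_phi by (auto simp: image_Int [symmetric])
  qed
qed

end
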